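(* Let $F:\mathbb{R}^n\rightrightarrows\mathbb{R}^p$ be a nearly convex set-valued mapping and $\Omega\subset\mathbb{R}^n$ a nearly convex set such that $\operatorname{ri}(\operatorname{dom} F)\cap\operatorname{ri}\Omega\neq\emptyset$. Then $$\operatorname{ri}\big(F(\Omega)\big)=\bigcup_{x\in(\operatorname{ri}\Omega)\cap\operatorname{ri}(\operatorname{dom} F)}\operatorname{ri} F(x),$$ where $F(\Omega)=\bigcup_{x\in\Omega}F(x)$.
   Context: A set $\Omega\subset\mathbb{R}^k$ is nearly convex if there is a convex set $C$ with $C\subset\Omega\subset\overline{C}$. For an arbitrary set $\Omega$, $\operatorname{ri}\Omega=\{a\in\Omega:\exists\delta>0,\ B(a;\delta)\cap\operatorname{aff}\Omega\subset\Omega\}$. For $F:\mathbb{R}^n\rightrightarrows\mathbb{R}^p$: $\operatorname{dom} F=\{x:F(x)\neq\emptyset\}$, $\operatorname{gph} F=\{(x,y):y\in F(x)\}$; $F$ is nearly convex if $\operatorname{gph} F$ is a nearly convex subset of $\mathbb{R}^n\times\mathbb{R}^p$. *)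

theory Defs
  imports "HOL-Analysis.Analysis"
begin

definition nearly_convex :: "'a::euclidean_space set \<Rightarrow> bool" where
  "nearly_convex \<Omega> \<longleftrightarrow> (\<exists>C. convex C \<and> C \<subseteq> \<Omega> \<and> \<Omega> \<subseteq> closure C)"

definition ri :: "'a::euclidean_space set \<Rightarrow> 'a set" where
  "ri \<Omega> = {a \<in> \<Omega>. \<exists>\<delta>>0. ball a \<delta> \<inter> affine hull \<Omega> \<subseteq> \<Omega>}"

definition sv_dom :: "('a \<Rightarrow> 'b set) \<Rightarrow> 'a set" where
  "sv_dom F = {x. F x \<noteq> {}}"

definition sv_gph :: "('a \<Rightarrow> 'b set) \<Rightarrow> ('a \<times> 'b) set" where
  "sv_gph F = {(x, y). y \<in> F x}"

definition nearly_convex_map :: "('a::euclidean_space \<Rightarrow> 'b::euclidean_space set) \<Rightarrow> bool" where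
  "nearly_convex_map F \<longleftrightarrow> nearly_convex (sv_gph F)"

end

theory Submission
  imports Defs
begin

text \<open>
  A nearly convex set has the same relative interior as any convex set it is sandwiched
  between, so all relative interiors may be computed from convex cores: C for the graph of F
  and D for \<Omega>. Then F(\<Omega>) is sandwiched between the projection onto the second factor of
  C \<inter> (D \<times> R^p) and its closure, and the qualification condition makes the relative interior of
  this intersection the intersection of the relative interiors. Finally Rockafellar's
  description of the relative interior of a convex set in a product by its slices, together
  with the fact that over a point of ri(dom F) the slice of C is a convex core of F(x),
  gives the formula.
\<close>

lemmas linear_fst = bounded_linear.linear[OF bounded_linear_fst]
lemmas linear_snd = bounded_linear.linear[OF bounded_linear_snd]

lemma ri_eq_rel_interior: "ri S = rel_interior S"
  unfolding ri_def rel_interior_ball by auto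

lemma rel_interior_eq_if_between_closure:
  fixes S :: "'a::euclidean_space set"
  assumes "convex C" "C \<subseteq> S" "S \<subseteq> closure C"
  shows "rel_interior S = rel_interior C"
proof -
  have hull_eq: "affine hull S = affine hull C"
    using hull_mono[OF assms(2)] hull_mono[OF assms(3), of affine]
      closure_same_affine_hull[of C] by auto
  have "rel_interior C \<subseteq> rel_interior S"
    using rel_interior_mono[OF assms(2)] hull_eq by simp
  moreover have "rel_interior S \<subseteq> rel_interior (closure C)"
    using rel_interior_mono[OF assms(3)] hull_eq closure_same_affine_hull[of C] by simp
  ultimately show ?thesis
    using convex_rel_interior_closure[OF assms(1)] by auto
qed

lemma rel_interior_linear_image_between_closure:
  fixes f :: "'a::euclidean_space \<Rightarrow> 'b::euclidean_space"
  assumes "linear f" "convex C" "C \<subseteq> S" "S \<subseteq> closure C"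
  shows "rel_interior (f ` S) = f ` rel_interior C"
proof -
  have "f ` S \<subseteq> f ` closure C"
    using assms(4) by blast
  also have "\<dots> \<subseteq> closure (f ` C)"
    using closure_linear_image_subset[OF assms(1)] .
  finally have "rel_interior (f ` S) = rel_interior (f ` C)"
    using assms by (intro rel_interior_eq_if_between_closure convex_linear_image) auto
  then show ?thesis
    using rel_interior_convex_linear_image[OF assms(1,2)] by simp
qed

lemma affine_Times: "affine S \<Longrightarrow> affine T \<Longrightarrow> affine (S \<times> T)"
  unfolding affine_def by auto

lemma convex_slice:
  assumes "convex C"
  shows "convex {z. (x, z) \<in> C}"
  unfolding convex_def
proof (intro ballI allI impI, simp)
  fix a b and u v :: real
  assume "(x, a) \<in> C" "(x, b) \<in> C" "0 \<le> u" "0 \<le> v" "u + v = 1"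
  then have "u *\<^sub>R (x, a) + v *\<^sub>R (x, b) \<in> C"
    using assms unfolding convex_def by blast
  moreover have "u *\<^sub>R (x, a) + v *\<^sub>R (x, b) = (x, u *\<^sub>R a + v *\<^sub>R b)"
    using \<open>u + v = 1\<close> by (simp add: scaleR_left_distrib[symmetric])
  ultimately show "(x, u *\<^sub>R a + v *\<^sub>R b) \<in> C"
    by simp
qed

lemma mem_rel_interior_iff_slice:
  fixes C :: "('a::euclidean_space \<times> 'b::euclidean_space) set"
  assumes "convex C"
  shows "(x, z) \<in> rel_interior C \<longleftrightarrow>
    x \<in> rel_interior (fst ` C) \<and> z \<in> rel_interior {z. (x, z) \<in> C}"
proof -
  have "{x. {z. (x, z) \<in> C} \<noteq> {}} = fst ` C"
    by force
  then show ?thesis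
    using rel_interior_projection[OF assms refl] by simp
qed

text \<open>The relative interior point is needed: the closure of a slice can be smaller than the slice
  of the closure, e.g. for the open upper half plane at x = 0.\<close>
lemma closure_slice:
  fixes C :: "('a::euclidean_space \<times> 'b::euclidean_space) set"
  assumes "convex C" "(x, z) \<in> rel_interior C"
  shows "closure {z. (x, z) \<in> C} = {z. (x, z) \<in> closure C}"
proof -
  have "closure (C \<inter> ({x} \<times> UNIV)) = closure C \<inter> ({x} \<times> UNIV)"
    using assms by (intro convex_affine_closure_Int affine_Times) auto
  moreover have "C \<inter> ({x} \<times> UNIV) = {x} \<times> {z. (x, z) \<in> C}"
    by auto
  ultimately show ?thesis
    by (auto simp: closure_Times)
qed

lemma rel_interior_sv_dom:
  fixes F :: "'a::euclidean_space \<Rightarrow> 'b::euclidean_space set"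
  assumes "convex C" "C \<subseteq> sv_gph F" "sv_gph F \<subseteq> closure C"
  shows "rel_interior (sv_dom F) = rel_interior (fst ` C)"
proof -
  have "sv_dom F = fst ` sv_gph F"
    unfolding sv_dom_def sv_gph_def by force
  then show ?thesis
    using rel_interior_linear_image_between_closure[OF linear_fst assms]
      rel_interior_convex_linear_image[OF linear_fst assms(1)]
    by simp
qed

lemma rel_interior_value_eq_slice:
  fixes F :: "'a::euclidean_space \<Rightarrow> 'b::euclidean_space set"
  assumes "convex C" "C \<subseteq> sv_gph F" "sv_gph F \<subseteq> closure C"
    and "x \<in> rel_interior (fst ` C)"
  shows "rel_interior (F x) = rel_interior {z. (x, z) \<in> C}"
proof (rule rel_interior_eq_if_between_closure[OF convex_slice[OF assms(1)]])
  show "{z. (x, z) \<in> C} \<subseteq> F x"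
    using assms(2) unfolding sv_gph_def by auto
  obtain z where "(x, z) \<in> rel_interior C"
    using assms(4) rel_interior_convex_linear_image[OF linear_fst assms(1)]
    by force
  then show "F x \<subseteq> closure {z. (x, z) \<in> C}"
    using assms(3) closure_slice[OF assms(1)] unfolding sv_gph_def by auto
qed

lemma rel_interior_snd_image_restrict:
  fixes G :: "('a::euclidean_space \<times> 'b::euclidean_space) set"
  assumes "convex C" "C \<subseteq> G" "G \<subseteq> closure C"
    and "convex D" "D \<subseteq> \<Omega>" "\<Omega> \<subseteq> closure D"
    and "rel_interior C \<inter> (rel_interior D \<times> UNIV) \<noteq> {}"
  shows "rel_interior (snd ` (G \<inter> (\<Omega> \<times> UNIV))) =
    snd ` (rel_interior C \<inter> (rel_interior D \<times> UNIV))"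
proof -
  have convex_cyl: "convex (D \<times> (UNIV :: 'b set))"
    using assms(4) by (simp add: convex_Times)
  have ri_cyl: "rel_interior (D \<times> (UNIV :: 'b set)) = rel_interior D \<times> UNIV"
    using rel_interior_Times[OF assms(4) convex_UNIV] by simp
  have "closure (C \<inter> (D \<times> UNIV)) = closure C \<inter> closure (D \<times> UNIV)"
    using closure_Int_convex[OF assms(1) convex_cyl] assms(7) ri_cyl by simp
  then have "G \<inter> (\<Omega> \<times> UNIV) \<subseteq> closure (C \<inter> (D \<times> UNIV))"
    using assms(3,6) by (auto simp: closure_Times)
  moreover have "C \<inter> (D \<times> UNIV) \<subseteq> G \<inter> (\<Omega> \<times> UNIV)"
    using assms(2,5) by auto
  moreover have "rel_interior (C \<inter> (D \<times> UNIV)) = rel_interior C \<inter> (rel_interior D \<times> UNIV)"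
    using convex_rel_interior_inter_two[OF assms(1) convex_cyl] assms(7) ri_cyl by simp
  ultimately show ?thesis
    using rel_interior_linear_image_between_closure[OF linear_snd convex_Int[OF assms(1) convex_cyl]]
    by simp
qed

theorem theorem3p1:
  fixes F :: "'n::euclidean_space \<Rightarrow> 'p::euclidean_space set"
    and \<Omega> :: "'n set"
  assumes "nearly_convex_map F"
    and "nearly_convex \<Omega>"
    and "ri (sv_dom F) \<inter> ri \<Omega> \<noteq> {}"
  shows "ri (\<Union>x\<in>\<Omega>. F x) = (\<Union>x\<in>ri \<Omega> \<inter> ri (sv_dom F). ri (F x))"
proof -
  obtain C where C: "convex C" "C \<subseteq> sv_gph F" "sv_gph F \<subseteq> closure C"
    using assms(1) unfolding nearly_convex_map_def nearly_convex_def by blast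
  obtain D where D: "convex D" "D \<subseteq> \<Omega>" "\<Omega> \<subseteq> closure D"
    using assms(2) unfolding nearly_convex_def by blast
  note ri_dom = rel_interior_sv_dom[OF C] and ri_\<Omega> = rel_interior_eq_if_between_closure[OF D]
  have image: "(\<Union>x\<in>\<Omega>. F x) = snd ` (sv_gph F \<inter> (\<Omega> \<times> UNIV))"
    unfolding sv_gph_def by force
  have "rel_interior C \<inter> (rel_interior D \<times> UNIV) \<noteq> {}"
    using assms(3) rel_interior_convex_linear_image[OF linear_fst C(1)]
    unfolding ri_eq_rel_interior ri_dom ri_\<Omega> by force
  then have "rel_interior (\<Union>x\<in>\<Omega>. F x) = snd ` (rel_interior C \<inter> (rel_interior D \<times> UNIV))"
    unfolding image by (rule rel_interior_snd_image_restrict[OF C D])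
  also have "\<dots> = (\<Union>x\<in>rel_interior D \<inter> rel_interior (fst ` C). rel_interior {z. (x, z) \<in> C})"
    using mem_rel_interior_iff_slice[OF C(1)] by force
  also have "\<dots> = (\<Union>x\<in>rel_interior D \<inter> rel_interior (fst ` C). rel_interior (F x))"
    using rel_interior_value_eq_slice[OF C] by auto
  finally show ?thesis
    unfolding ri_eq_rel_interior ri_dom ri_\<Omega> .
qed

end
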